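(* Let $M\ge 2$, and let $(\vec n_M^\dagger,\vec P_M^\dagger)$, with $\vec n_M^\dagger\in\mathbb{R}_{>0}^M$, $\vec P_M^\dagger\in\mathbb{R}_{\ge0}^M$, satisfy $\varepsilon_{M-1}(\vec n_{M-1}^\dagger,\vec P_{M-1}^\dagger)>\varepsilon_M(\vec n_M^\dagger,\vec P_M^\dagger)$. Then the function $P\mapsto \varepsilon_M(\vec n_M^\dagger,(P_1^\dagger,\dots,P_{M-1}^\dagger,P))$ has strictly negative derivative at $P=P_M^\dagger$; in particular it is strictly decreasing in a neighborhood of $P_M^\dagger$.
   Context: Fix $B>0$. Let $Q(x)=\frac{1}{\sqrt{2\pi}}\int_x^\infty e^{-t^2/2}\,dt$. For $m\ge 1$, blocklengths $\vec n_m=(n_1,\dots,n_m)$ with $n_i>0$ and powers $\vec P_m=(P_1,\dots,P_m)$ with $P_i\ge 0$ (not all zero), define $$\varepsilon_m(\vec n_m,\vec P_m)=Q\!\left(\frac{\sum_{i=1}^m n_i\ln(1+P_i)-B\ln 2}{\sqrt{\sum_{i=1}^m \frac{n_iP_i(P_i+2)}{(P_i+1)^2}}}\right).$$ *)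

theory Defs
  imports "HOL-Analysis.Analysis"
begin

definition Qfun :: "real \<Rightarrow> real" where
  "Qfun x = (LBINT t:{x..}. exp (- (t\<^sup>2) / 2)) / sqrt (2 * pi)"

definition eps :: "real \<Rightarrow> nat \<Rightarrow> (nat \<Rightarrow> real) \<Rightarrow> (nat \<Rightarrow> real) \<Rightarrow> real" where
  "eps B m n P = Qfun (((\<Sum>i=1..m. n i * ln (1 + P i)) - B * ln 2) /
      sqrt (\<Sum>i=1..m. n i * P i * (P i + 2) / (P i + 1)\<^sup>2))"

end

theory Submission
  imports Defs "HOL-Probability.Probability"
begin

text \<open>Let X(t) be the argument of Q in eps_M when the last power is t, so that
  eps_{M-1} = Q(X(0)) and eps_M = Q(X(P_M)). Differentiating gives
  X'(t) = n_M G(t) / ((1 + t)^3 V(t)^(3/2)), where V(t) is the variance under the root in X and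
  G(t) = (1 + t)^2 V(t) - (numerator of X(t)); G is strictly increasing because ln (1 + t) grows
  more slowly than t (t + 2). As Q is strictly decreasing, the gap hypothesis says X(0) < X(P_M).
  If G(P_M) \<le> 0, then G \<le> 0 on [0, P_M] and X would be nonincreasing there; hence G(P_M) > 0,
  by continuity X' > 0 near P_M, and Q \<circ> X has negative derivative there.\<close>

lemma has_real_derivative_upper_tail_integral:
  fixes f :: "real \<Rightarrow> real"
  assumes f_int: "integrable lborel f" and f_cont: "continuous_on UNIV f"
  shows "((\<lambda>y. LBINT t:{y..}. f t) has_real_derivative - f x) (at x)"
proof -
  have set_int: "set_integrable lborel A f" if "A \<in> sets lborel" for A
    using integrable_mult_indicator[OF that f_int] unfolding set_integrable_def by blast
  have tail: "(LBINT t:{y..}. f t) = (LBINT t=ereal 0..\<infinity>. f t) - (LBINT t=ereal 0..ereal y. f t)"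
    for y
  proof -
    have "(LBINT t=ereal 0..ereal y. f t) + (LBINT t=ereal y..\<infinity>. f t) = (LBINT t=ereal 0..\<infinity>. f t)"
      by (rule interval_integral_sum) (simp add: interval_lebesgue_integrable_def set_int)
    moreover have "(LBINT t=ereal y..\<infinity>. f t) = (LBINT t:{y<..}. f t)"
      by (rule interval_integral_to_infinity_eq)
    moreover have "(LBINT t:{y<..}. f t) = (LBINT t:{y..}. f t)"
      by (rule set_integral_discrete_difference[where X="{y}"]) auto
    ultimately show ?thesis by linarith
  qed
  define a b where "a = min 0 x - 1" and "b = max 0 x + 1"
  have "((\<lambda>u. LBINT t=ereal 0..ereal u. f t) has_vector_derivative f x) (at x within {a..b})"
    using f_cont by (intro interval_integral_FTC2) (auto simp: a_def b_def intro: continuous_on_subset)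
  then have "((\<lambda>u. LBINT t=ereal 0..ereal u. f t) has_vector_derivative f x) (at x within {a<..<b})"
    by (rule has_vector_derivative_within_subset) auto
  then have "((\<lambda>u. LBINT t=ereal 0..ereal u. f t) has_vector_derivative f x) (at x)"
    by (subst (asm) has_vector_derivative_within_open) (auto simp: a_def b_def)
  then have "((\<lambda>u. LBINT t=ereal 0..ereal u. f t) has_real_derivative f x) (at x)"
    by (simp add: has_real_derivative_iff_has_vector_derivative)
  then show ?thesis
    unfolding tail using DERIV_diff[OF DERIV_const] by fastforce
qed

lemma Qfun_eq_std_normal_tail: "Qfun x = (LBINT t:{x..}. std_normal_density t)"
  by (simp add: Qfun_def std_normal_density_def)

lemma Qfun_has_real_derivative: "(Qfun has_real_derivative - std_normal_density x) (at x)"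
  unfolding Qfun_eq_std_normal_tail[abs_def]
  by (rule has_real_derivative_upper_tail_integral[OF integrable_normal_density])
     (auto simp: normal_density_def intro!: continuous_intros)

lemma Qfun_strict_antimono: "a < b \<Longrightarrow> Qfun b < Qfun a"
  using Qfun_has_real_derivative normal_density_pos[of 1 0]
  by (intro DERIV_neg_imp_decreasing[of a b Qfun]) fastforce+

lemma Qfun_antimono: "a \<le> b \<Longrightarrow> Qfun b \<le> Qfun a"
  using Qfun_strict_antimono[of a b] by (cases "a = b") auto

definition dispersion :: "real \<Rightarrow> real" where
  "dispersion t = t * (t + 2) / (t + 1)\<^sup>2"

text \<open>The argument of \<open>Qfun\<close> in \<open>eps B M n (P(M := t))\<close>: \<open>C\<close> and \<open>S\<close> are the
  numerator and the variance contributed by the first \<open>M - 1\<close> blocks, and \<open>a = n M\<close>.\<close>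
definition rate_ratio :: "real \<Rightarrow> real \<Rightarrow> real \<Rightarrow> real \<Rightarrow> real" where
  "rate_ratio C S a t = (C + a * ln (1 + t)) / sqrt (S + a * dispersion t)"

definition rate_ratio_slope :: "real \<Rightarrow> real \<Rightarrow> real \<Rightarrow> real \<Rightarrow> real" where
  "rate_ratio_slope C S a t = S * (1 + t)\<^sup>2 + a * t * (t + 2) - (C + a * ln (1 + t))"

lemma dispersion_nonneg: "t \<ge> 0 \<Longrightarrow> dispersion t \<ge> 0"
  by (simp add: dispersion_def)

lemma dispersion_pos: "t > 0 \<Longrightarrow> dispersion t > 0"
  by (simp add: dispersion_def)

lemma dispersion_has_real_derivative:
  assumes "t > -1"
  shows "(dispersion has_real_derivative 2 / (t + 1) ^ 3) (at t)"
proof -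
  have "t + 1 \<noteq> 0" using assms by simp
  then show ?thesis
    unfolding dispersion_def[abs_def]
    by (auto intro!: derivative_eq_intros simp: divide_simps)
       (simp add: algebra_simps power2_eq_square power3_eq_cube eval_nat_numeral)
qed

lemma sum_dispersion_pos:
  assumes "finite I" and "\<And>i. i \<in> I \<Longrightarrow> n i > 0" and "\<And>i. i \<in> I \<Longrightarrow> P i \<ge> 0"
    and "\<exists>i\<in>I. P i \<noteq> 0"
  shows "(\<Sum>i\<in>I. n i * dispersion (P i)) > 0"
proof -
  obtain j where j: "j \<in> I" "P j \<noteq> 0" using assms(4) by blast
  have "n j * dispersion (P j) > 0"
    using j assms(2,3)[of j] by (simp add: dispersion_pos)
  moreover have "n i * dispersion (P i) \<ge> 0" if "i \<in> I" for i
    using that assms(2,3)[of i] by (simp add: dispersion_nonneg)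
  ultimately show ?thesis by (intro sum_pos2[OF assms(1) j(1)]) auto
qed

lemma rate_ratio_has_real_derivative:
  assumes a: "a > 0" and S: "S > 0" and t: "t \<ge> 0"
  shows "(rate_ratio C S a has_real_derivative
           a * rate_ratio_slope C S a t /
             ((1 + t) ^ 3 * (S + a * dispersion t) * sqrt (S + a * dispersion t))) (at t)"
proof -
  define V where "V = S + a * dispersion t"
  define N where "N = C + a * ln (1 + t)"
  have V: "V > 0" unfolding V_def using a S t dispersion_nonneg[OF t] by (simp add: add_pos_nonneg)
  have dV: "((\<lambda>t. S + a * dispersion t) has_real_derivative a * (2 / (t + 1) ^ 3)) (at t)"
    using t by (auto intro!: derivative_eq_intros dispersion_has_real_derivative)
  have dN: "((\<lambda>t. C + a * ln (1 + t)) has_real_derivative a * (1 / (1 + t))) (at t)"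
    using t by (auto intro!: derivative_eq_intros)
  have deriv: "(rate_ratio C S a has_real_derivative
      (a * (1 / (1 + t)) * sqrt V - N * (inverse (sqrt V) / 2 * (a * (2 / (t + 1) ^ 3)))) /
        (sqrt V)\<^sup>2) (at t)"
    unfolding rate_ratio_def[abs_def] V_def N_def power2_eq_square
    using DERIV_divide[OF dN DERIV_chain2[OF DERIV_real_sqrt dV]] V[unfolded V_def] by simp
  have quotient_simp: "(a * (1 / u) * r - N * (inverse r / 2 * (a * (2 / u ^ 3)))) / r\<^sup>2
      = a * (u\<^sup>2 * r\<^sup>2 - N) / (u ^ 3 * r\<^sup>2 * r)" if "r > 0" "u > 0" for r u :: real
    using that by (simp add: field_simps power2_eq_square power3_eq_cube)
  have slope: "(1 + t)\<^sup>2 * V - N = rate_ratio_slope C S a t"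
    using t unfolding V_def N_def rate_ratio_slope_def dispersion_def
    by (simp add: field_simps add.commute)
  show ?thesis
    using deriv quotient_simp[of "sqrt V" "1 + t"] V t unfolding slope[symmetric] V_def
    by (simp add: add.commute)
qed

lemma rate_ratio_deriv_sgn:
  assumes a: "a > 0" and S: "S > 0" and t: "t \<ge> 0"
  obtains D where "(rate_ratio C S a has_real_derivative D) (at t)"
    and "sgn D = sgn (rate_ratio_slope C S a t)"
proof
  let ?V = "S + a * dispersion t"
  have "?V > 0" using a S dispersion_nonneg[OF t] by (simp add: add_pos_nonneg)
  then show "sgn (a * rate_ratio_slope C S a t / ((1 + t) ^ 3 * ?V * sqrt ?V))
      = sgn (rate_ratio_slope C S a t)"
    using a t by (simp add: sgn_mult sgn_divide)
qed (rule rate_ratio_has_real_derivative[OF a S t])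

lemma rate_ratio_slope_strict_mono:
  assumes "a > 0" "S \<ge> 0" "0 \<le> s" "s < t"
  shows "rate_ratio_slope C S a s < rate_ratio_slope C S a t"
proof -
  have "ln (1 + t) - ln (1 + s) = ln ((1 + t) / (1 + s))"
    using assms by (simp add: ln_div)
  also have "\<dots> \<le> (1 + t) / (1 + s) - 1"
    using assms by (intro ln_le_minus_one) auto
  also have "\<dots> = (t - s) / (1 + s)"
    using assms by (simp add: field_simps)
  also have "\<dots> \<le> t - s"
    using assms by (simp add: divide_le_eq)
  finally have log_growth: "ln (1 + t) - ln (1 + s) \<le> t - s" .
  have "t * (t + 2) - s * (s + 2) = (t - s) * (t + s + 2)"
    by (simp add: algebra_simps)
  also have "\<dots> \<ge> (t - s) * 2"
    using assms by (intro mult_left_mono) auto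
  finally have quad_growth: "t * (t + 2) - s * (s + 2) \<ge> 2 * (t - s)" by simp
  have "S * (1 + s)\<^sup>2 \<le> S * (1 + t)\<^sup>2"
    using assms by (intro mult_left_mono power_mono) auto
  moreover have "a * (ln (1 + t) - ln (1 + s)) < a * (t * (t + 2) - s * (s + 2))"
    using log_growth quad_growth assms by (intro mult_strict_left_mono) auto
  ultimately show ?thesis
    unfolding rate_ratio_slope_def by (simp add: algebra_simps)
qed

lemma rate_ratio_slope_pos_if_increase:
  assumes a: "a > 0" and S: "S > 0" and t: "t \<ge> 0"
    and increase: "rate_ratio C S a 0 < rate_ratio C S a t"
  shows "rate_ratio_slope C S a t > 0"
proof (rule ccontr)
  assume "\<not> rate_ratio_slope C S a t > 0"
  then have slope_nonpos: "rate_ratio_slope C S a x \<le> 0" if "0 \<le> x" "x \<le> t" for x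
    using rate_ratio_slope_strict_mono[OF a less_imp_le[OF S], where C = C and s = x and t = t] that
    by (cases "x = t") auto
  have "rate_ratio C S a t \<le> rate_ratio C S a 0"
  proof (rule DERIV_nonpos_imp_nonincreasing[OF t])
    fix x assume x: "0 \<le> x" "x \<le> t"
    obtain D where "(rate_ratio C S a has_real_derivative D) (at x)"
      and "sgn D = sgn (rate_ratio_slope C S a x)"
      by (rule rate_ratio_deriv_sgn[OF a S x(1)])
    then show "\<exists>y. (rate_ratio C S a has_real_derivative y) (at x) \<and> y \<le> 0"
      using slope_nonpos[OF x] by (metis sgn_le_0_iff)
  qed
  with increase show False by simp
qed

lemma Qfun_rate_ratio_deriv_neg:
  assumes a: "a > 0" and S: "S > 0" and t: "t \<ge> 0"
    and slope: "rate_ratio_slope C S a t > 0"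
  shows "\<exists>D<0. ((\<lambda>p. Qfun (rate_ratio C S a p)) has_real_derivative D) (at t)"
proof -
  obtain D where deriv: "(rate_ratio C S a has_real_derivative D) (at t)"
    and "sgn D = sgn (rate_ratio_slope C S a t)"
    by (rule rate_ratio_deriv_sgn[OF a S t])
  with slope have "D > 0" by (metis sgn_greater)
  then have "- std_normal_density (rate_ratio C S a t) * D < 0"
    using normal_density_pos[of 1 0] by (simp add: mult_neg_pos)
  then show ?thesis
    using DERIV_chain2[OF Qfun_has_real_derivative deriv] by blast
qed

lemma Qfun_rate_ratio_locally_strict_decreasing:
  assumes a: "a > 0" and S: "S > 0" and t: "t \<ge> 0"
    and slope: "rate_ratio_slope C S a t > 0"
  shows "\<exists>\<delta>>0. \<forall>p\<in>{0..}. \<forall>q\<in>{0..}. t - \<delta> < p \<longrightarrow> p < q \<longrightarrow> q < t + \<delta> \<longrightarrow>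
           Qfun (rate_ratio C S a q) < Qfun (rate_ratio C S a p)"
proof -
  have "rate_ratio_slope C S a \<midarrow>t\<rightarrow> rate_ratio_slope C S a t"
    using t unfolding rate_ratio_slope_def by (auto intro!: tendsto_intros)
  from LIM_fun_gt_zero[OF this slope] obtain \<delta> where \<delta>: "\<delta> > 0"
    and near: "\<And>x. x \<noteq> t \<and> \<bar>t - x\<bar> < \<delta> \<longrightarrow> rate_ratio_slope C S a x > 0"
    by blast
  show ?thesis
  proof (intro exI[of _ \<delta>] conjI ballI impI)
    fix p q :: real
    assume pq: "p \<in> {0..}" "q \<in> {0..}" "t - \<delta> < p" "p < q" "q < t + \<delta>"
    show "Qfun (rate_ratio C S a q) < Qfun (rate_ratio C S a p)"
    proof (rule DERIV_neg_imp_decreasing[OF \<open>p < q\<close>])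
      fix x assume "p \<le> x" "x \<le> q"
      with pq have "x \<ge> 0" "rate_ratio_slope C S a x > 0"
        using near[of x] slope by (cases "x = t"; auto)+
      then show "\<exists>y. ((\<lambda>p. Qfun (rate_ratio C S a p)) has_real_derivative y) (at x) \<and> y < 0"
        using Qfun_rate_ratio_deriv_neg[OF a S] by blast
    qed
  qed (fact \<delta>)
qed

lemma eps_eq_dispersion:
  "eps B m n P = Qfun (((\<Sum>i=1..m. n i * ln (1 + P i)) - B * ln 2) /
      sqrt (\<Sum>i=1..m. n i * dispersion (P i)))"
  unfolding eps_def dispersion_def by (simp add: mult.assoc)

lemma eps_as_rate_ratio:
  fixes B :: real and n P :: "nat \<Rightarrow> real"
  assumes M: "M \<ge> 1"
  defines "C \<equiv> (\<Sum>i=1..M-1. n i * ln (1 + P i)) - B * ln 2"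
    and "S \<equiv> \<Sum>i=1..M-1. n i * dispersion (P i)"
  shows "eps B M n (P(M := t)) = Qfun (rate_ratio C S (n M) t)"
    and "eps B (M - 1) n P = Qfun (rate_ratio C S (n M) 0)"
proof -
  have split_last: "(\<Sum>i=1..M. f i) = (\<Sum>i=1..M-1. f i) + f M" for f :: "nat \<Rightarrow> real"
    using M by (cases M) (auto simp: add.commute)
  have "(\<Sum>i=1..M-1. n i * ln (1 + (P(M := t)) i)) = (\<Sum>i=1..M-1. n i * ln (1 + P i))"
    and "(\<Sum>i=1..M-1. n i * dispersion ((P(M := t)) i)) = S"
    using M by (auto simp: S_def intro!: sum.cong)
  then show "eps B M n (P(M := t)) = Qfun (rate_ratio C S (n M) t)"
    unfolding eps_eq_dispersion rate_ratio_def C_def split_last by (simp add: algebra_simps)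
  show "eps B (M - 1) n P = Qfun (rate_ratio C S (n M) 0)"
    unfolding eps_eq_dispersion rate_ratio_def C_def S_def by (simp add: dispersion_def)
qed

theorem lemma2:
  fixes B :: real and M :: nat and n P :: "nat \<Rightarrow> real"
  assumes B: "B > 0"
    and M: "M \<ge> 2"
    and n_pos: "\<And>i. i \<in> {1..M} \<Longrightarrow> n i > 0"
    and P_nonneg: "\<And>i. i \<in> {1..M} \<Longrightarrow> P i \<ge> 0"
    and P_nz: "\<exists>i\<in>{1..M-1}. P i \<noteq> 0"
    and gap: "eps B (M - 1) n P > eps B M n P"
  shows "(\<exists>D. D < 0 \<and>
           ((\<lambda>p. eps B M n (P(M := p))) has_real_derivative D) (at (P M) within {0..})) \<and>
         (\<exists>\<delta>>0. \<forall>p\<in>{0..}. \<forall>q\<in>{0..}.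
           P M - \<delta> < p \<longrightarrow> p < q \<longrightarrow> q < P M + \<delta> \<longrightarrow>
           eps B M n (P(M := q)) < eps B M n (P(M := p)))"
proof -
  define C where "C = (\<Sum>i=1..M-1. n i * ln (1 + P i)) - B * ln 2"
  define S where "S = (\<Sum>i=1..M-1. n i * dispersion (P i))"
  define a where "a = n M"
  have M1: "M \<ge> 1" using M by simp
  have eps_last: "eps B M n (P(M := p)) = Qfun (rate_ratio C S a p)" for p
    using eps_as_rate_ratio(1)[OF M1] unfolding C_def S_def a_def .
  have eps_prev: "eps B (M - 1) n P = Qfun (rate_ratio C S a 0)"
    using eps_as_rate_ratio(2)[OF M1] unfolding C_def S_def a_def .
  have a: "a > 0" and PM: "P M \<ge> 0"
    using n_pos P_nonneg M1 unfolding a_def by auto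
  have S: "S > 0"
    unfolding S_def using n_pos P_nonneg P_nz M by (intro sum_dispersion_pos) auto
  have "Qfun (rate_ratio C S a (P M)) < Qfun (rate_ratio C S a 0)"
    using gap eps_last[of "P M"] eps_prev by simp
  then have "rate_ratio C S a 0 < rate_ratio C S a (P M)"
    using Qfun_antimono not_le by blast
  then have slope: "rate_ratio_slope C S a (P M) > 0"
    by (rule rate_ratio_slope_pos_if_increase[OF a S PM])
  show ?thesis
    unfolding eps_last
    using Qfun_rate_ratio_deriv_neg[OF a S PM slope] has_field_derivative_at_within
      Qfun_rate_ratio_locally_strict_decreasing[OF a S PM slope]
    by blast
qed

end
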